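(* Let $S$ be a simple $(l,r)$-framed algebra, $C_S=\{\alpha\in\mathbb{Z}_2^{l+r}:S_{(0,\alpha)}\ne0\}$ (a subgroup), and let $\varepsilon:C_S\times C_S\to\{\pm1\}$ be a bimultiplicative map with $\varepsilon(\alpha,\alpha)=(-1)^{|\alpha|/2}$ and $\varepsilon(\alpha,\beta)\varepsilon(\beta,\alpha)=(-1)^{|\alpha\beta|}$ for all $\alpha,\beta\in C_S$. Let $\mathbb{C}[\hat C_S]$ be the algebra with basis $\{e_\alpha\}_{\alpha\in C_S}$ and product $e_\alpha e_\beta=\varepsilon(\alpha,\beta)e_{\alpha+\beta}$, graded by putting $e_\alpha$ in degree $(0,\alpha)$. Then there is a grading-preserving $\mathbb{C}$-algebra isomorphism between $A_S(0)=\bigoplus_{\alpha\in C_S}S_{(0,\alpha)}$ (with the product of $S$) and $\mathbb{C}[\hat C_S]$.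
   Context: Let $\mathrm{IS}=\{0,\frac12,\frac1{16}\}$ with fusion rule $\star$ (values are subsets): $0\star h=h\star0=\{h\}$, $\frac12\star\frac12=\{0\}$, $\frac12\star\frac1{16}=\frac1{16}\star\frac12=\{\frac1{16}\}$, $\frac1{16}\star\frac1{16}=\{0,\frac12\}$; $A(h_0,h_1,h_2,h_3)=\{h: h\in h_2\star h_3,\ h_0\in h_1\star h\}$. For $h\in A(h_0,h_1,h_2,h_3)$, $h'\in A(h_0,h_2,h_1,h_3)$ define $B^{h,h'}_{h_0,h_1,h_2,h_3}$: $B_{*,0,*,*}=B_{*,*,0,*}=1$; $B_{*,\frac12,\frac12,*}=-1$; $B_{a,\frac12,\frac1{16},a'}=B_{a,\frac1{16},\frac12,a'}=i$ if $a$ or $a'$ is $\frac12$, else $-i$; $B^{b,b'}_{a,\frac1{16},\frac1{16},a'}=e^{-\pi i/8}\cdot\{1$ if $a,a'\ne\frac1{16},a=a'$; $i$ if $a,a'\neq\frac1{16},a\ne a'$; $\frac{1+i}2$ if $a=a'=\frac1{16},b=b'$; $\frac{1-i}2$ if $a=a'=\frac1{16},b\neq b'\}$. $\mathrm{IS}^{(l,r)}=\mathrm{IS}^l\times\mathrm{IS}^r$, $\lambda=(h_1,..,h_l,\bar h_1,..,\bar h_r)$, $s(\lambda)=\sum h_i-\sum\bar h_j$; $\star$, $A$ componentwise; $B^{\lambda,\lambda'}_{\lambda^0,\dots,\lambda^3}=\prod_{i\le l}B^{h_i,h'_i}_{h^0_i,\dots,h^3_i}\prod_{j\le r}\overline{B^{\bar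 h_j,\bar h'_j}_{\bar h^0_j,\dots,\bar h^3_j}}$. An $(l,r)$-framed algebra: finite-dimensional $\mathrm{IS}^{(l,r)}$-graded $S=\bigoplus S_\lambda$ over $\mathbb{C}$ with bilinear product, nonzero $1\in S_0$, $a\cdot_\lambda b$ the $S_\lambda$-component of $a\cdot b$, satisfying (FA1) $S_\lambda=0$ unless $s(\lambda)\in\mathbb{Z}$; (FA2) $S_0=\mathbb{C}1$, $1$ a two-sided unit; (FA3) $S_{\lambda^1}\cdot S_{\lambda^2}\subset\bigoplus_{\lambda\in\lambda^1\star\lambda^2}S_\lambda$; (FA4) $a_2\cdot_{\lambda^0}(a_1\cdot_{\lambda'}a_3)=\sum_{\lambda\in A(\lambda^0,\lambda^1,\lambda^2,\lambda^3)}B^{\lambda,\lambda'}_{\lambda^0,\lambda^1,\lambda^2,\lambda^3}a_1\cdot_{\lambda^0}(a_2\cdot_\lambda a_3)$ for $a_i\in S_{\lambda^i}$, $\lambda'\in A(\lambda^0,\lambda^2,\lambda^1,\lambda^3)$. Ideal: graded subspace $M$ with $S\cdot M\subset M$; simple: only ideals $0$ and $S$. Identify $\mathrm{IS}$ with $\{(d,c)\in\mathbb{Z}_2^2:dc=0\}$ via $0\leftrightarrow(0,0)$, $\frac12\leftrightarrow(0,1)$, $\frac1{16}\leftrightarrow(1,0)$, and componentwise $\mathrm{IS}^{(l,r)}$ with pairs $(d,c)\in(\mathbb{Z}_2^{l+r})^2$, $dc=0$. For $c\in\mathbb{Z}_2^{l+r}$, $|c|=|c|_l-|c|_r$ where $|c|_l,|c|_r$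 count ones in the first $l$ and last $r$ coordinates; products of codewords are componentwise. *)

theory Defs
  imports "HOL-Analysis.Analysis"
begin

datatype isv = I0 | Ih | Is

fun isval :: "isv \<Rightarrow> real" where
  "isval I0 = 0" | "isval Ih = 1/2" | "isval Is = 1/16"

fun fus :: "isv \<Rightarrow> isv \<Rightarrow> isv set" where
  "fus I0 h = {h}"
| "fus h I0 = {h}"
| "fus Ih Ih = {I0}"
| "fus Ih Is = {Is}"
| "fus Is Ih = {Is}"
| "fus Is Is = {I0, Ih}"

text \<open>Single-coordinate braiding coefficient; arguments (h, h', h0, h1, h2, h3)
  stand for B^{h,h'}_{h0,h1,h2,h3}.  Values at argument combinations not covered by
  the definition (which never occur with h in A(h0,h1,h2,h3)) are set to 0.\<close>

definition Bis :: "isv \<Rightarrow> isv \<Rightarrow> isv \<Rightarrow> isv \<Rightarrow> isv \<Rightarrow> isv \<Rightarrow> complex" where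
  "Bis h h' h0 h1 h2 h3 =
    (if h1 = I0 \<or> h2 = I0 then 1
     else if h1 = Ih \<and> h2 = Ih then -1
     else if (h1 = Ih \<and> h2 = Is) \<or> (h1 = Is \<and> h2 = Ih) then
       (if h0 = Ih \<or> h3 = Ih then \<i> else - \<i>)
     else \<comment> \<open>h1 = h2 = 1/16\<close>
       exp (- (pi * \<i> / 8)) *
       (if h0 \<noteq> Is \<and> h3 \<noteq> Is then (if h0 = h3 then 1 else \<i>)
        else if h0 = Is \<and> h3 = Is then
          (if h = h' then (1 + \<i>) / 2 else (1 - \<i>) / 2)
        else 0))"

text \<open>A degree in IS^(l,r) is a function nat => isv that is I0 outside {0..<l+r};
  coordinates 0..<l are the left ones, l..<l+r the right ones.\<close>

type_synonym lam = "nat \<Rightarrow> isv"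

definition Lam :: "nat \<Rightarrow> nat \<Rightarrow> lam set" where
  "Lam l r = {\<kappa>. \<forall>i\<ge>l+r. \<kappa> i = I0}"

definition lam0 :: lam where "lam0 = (\<lambda>_. I0)"

definition sdeg :: "nat \<Rightarrow> nat \<Rightarrow> lam \<Rightarrow> real" where
  "sdeg l r \<kappa> = (\<Sum>i<l. isval (\<kappa> i)) - (\<Sum>j\<in>{l..<l+r}. isval (\<kappa> j))"

definition lstar :: "nat \<Rightarrow> nat \<Rightarrow> lam \<Rightarrow> lam \<Rightarrow> lam set" where
  "lstar l r \<kappa>1 \<kappa>2 = {\<kappa> \<in> Lam l r. \<forall>i<l+r. \<kappa> i \<in> fus (\<kappa>1 i) (\<kappa>2 i)}"

definition lA :: "nat \<Rightarrow> nat \<Rightarrow> lam \<Rightarrow> lam \<Rightarrow> lam \<Rightarrow> lam \<Rightarrow> lam set" where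
  "lA l r \<kappa>0 \<kappa>1 \<kappa>2 \<kappa>3 = {\<kappa>. \<kappa> \<in> lstar l r \<kappa>2 \<kappa>3 \<and> \<kappa>0 \<in> lstar l r \<kappa>1 \<kappa>}"

definition lB :: "nat \<Rightarrow> nat \<Rightarrow> lam \<Rightarrow> lam \<Rightarrow> lam \<Rightarrow> lam \<Rightarrow> lam \<Rightarrow> lam \<Rightarrow> complex" where
  "lB l r \<kappa> \<kappa>' \<kappa>0 \<kappa>1 \<kappa>2 \<kappa>3 =
     (\<Prod>i<l. Bis (\<kappa> i) (\<kappa>' i) (\<kappa>0 i) (\<kappa>1 i) (\<kappa>2 i) (\<kappa>3 i)) *
     (\<Prod>j\<in>{l..<l+r}. cnj (Bis (\<kappa> j) (\<kappa>' j) (\<kappa>0 j) (\<kappa>1 j) (\<kappa>2 j) (\<kappa>3 j)))"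

definition graded :: "nat \<Rightarrow> nat \<Rightarrow> (complex \<Rightarrow> 'v::ab_group_add \<Rightarrow> 'v) \<Rightarrow> (lam \<Rightarrow> 'v set) \<Rightarrow> bool" where
  "graded l r smul S \<longleftrightarrow>
     (\<forall>\<kappa>\<in>Lam l r. module.subspace smul (S \<kappa>)) \<and>
     (\<forall>v. \<exists>!f. (\<forall>\<kappa>. \<kappa> \<notin> Lam l r \<longrightarrow> f \<kappa> = 0) \<and> (\<forall>\<kappa>\<in>Lam l r. f \<kappa> \<in> S \<kappa>) \<and>
               v = (\<Sum>\<kappa>\<in>Lam l r. f \<kappa>))"

definition comp :: "nat \<Rightarrow> nat \<Rightarrow> (lam \<Rightarrow> 'v::ab_group_add set) \<Rightarrow> lam \<Rightarrow> 'v \<Rightarrow> 'v" where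
  "comp l r S \<kappa> v = (THE f. (\<forall>\<mu>. \<mu> \<notin> Lam l r \<longrightarrow> f \<mu> = 0) \<and> (\<forall>\<mu>\<in>Lam l r. f \<mu> \<in> S \<mu>) \<and>
               v = (\<Sum>\<mu>\<in>Lam l r. f \<mu>)) \<kappa>"

definition framed_algebra ::
  "nat \<Rightarrow> nat \<Rightarrow> (complex \<Rightarrow> 'v::ab_group_add \<Rightarrow> 'v) \<Rightarrow> ('v \<Rightarrow> 'v \<Rightarrow> 'v) \<Rightarrow> 'v \<Rightarrow> (lam \<Rightarrow> 'v set) \<Rightarrow> bool"
where
  "framed_algebra l r smul mul one S \<longleftrightarrow>
     Vector_Spaces.vector_space smul \<and>
     (\<exists>B. finite B \<and> module.span smul B = UNIV) \<and>
     graded l r smul S \<and>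
     \<comment> \<open>bilinear product\<close>
     (\<forall>a b c. mul (a + b) c = mul a c + mul b c) \<and>
     (\<forall>a b c. mul a (b + c) = mul a b + mul a c) \<and>
     (\<forall>x a b. mul (smul x a) b = smul x (mul a b)) \<and>
     (\<forall>x a b. mul a (smul x b) = smul x (mul a b)) \<and>
     \<comment> \<open>FA1\<close>
     (\<forall>\<kappa>\<in>Lam l r. sdeg l r \<kappa> \<notin> \<int> \<longrightarrow> S \<kappa> = {0}) \<and>
     \<comment> \<open>FA2\<close>
     one \<noteq> 0 \<and> one \<in> S lam0 \<and> S lam0 = {smul x one | x. True} \<and>
     (\<forall>a. mul one a = a \<and> mul a one = a) \<and>
     \<comment> \<open>FA3\<close>
     (\<forall>\<kappa>1\<in>Lam l r. \<forall>\<kappa>2\<in>Lam l r. \<forall>a\<in>S \<kappa>1. \<forall>b\<in>S \<kappa>2.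
         \<forall>\<kappa>\<in>Lam l r. \<kappa> \<notin> lstar l r \<kappa>1 \<kappa>2 \<longrightarrow> comp l r S \<kappa> (mul a b) = 0) \<and>
     \<comment> \<open>FA4\<close>
     (\<forall>\<kappa>0\<in>Lam l r. \<forall>\<kappa>1\<in>Lam l r. \<forall>\<kappa>2\<in>Lam l r. \<forall>\<kappa>3\<in>Lam l r.
       \<forall>a1\<in>S \<kappa>1. \<forall>a2\<in>S \<kappa>2. \<forall>a3\<in>S \<kappa>3. \<forall>\<kappa>'\<in>lA l r \<kappa>0 \<kappa>2 \<kappa>1 \<kappa>3.
         comp l r S \<kappa>0 (mul a2 (comp l r S \<kappa>' (mul a1 a3))) =
         (\<Sum>\<kappa>\<in>lA l r \<kappa>0 \<kappa>1 \<kappa>2 \<kappa>3.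
            smul (lB l r \<kappa> \<kappa>' \<kappa>0 \<kappa>1 \<kappa>2 \<kappa>3) (comp l r S \<kappa>0 (mul a1 (comp l r S \<kappa> (mul a2 a3))))))"

definition is_ideal ::
  "nat \<Rightarrow> nat \<Rightarrow> (complex \<Rightarrow> 'v::ab_group_add \<Rightarrow> 'v) \<Rightarrow> ('v \<Rightarrow> 'v \<Rightarrow> 'v) \<Rightarrow> (lam \<Rightarrow> 'v set) \<Rightarrow> 'v set \<Rightarrow> bool"
where
  "is_ideal l r smul mul S M \<longleftrightarrow>
     module.subspace smul M \<and> (\<forall>v\<in>M. \<forall>\<kappa>\<in>Lam l r. comp l r S \<kappa> v \<in> M) \<and>
     (\<forall>a. \<forall>m\<in>M. mul a m \<in> M)"

definition simple_framed_algebra ::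
  "nat \<Rightarrow> nat \<Rightarrow> (complex \<Rightarrow> 'v::ab_group_add \<Rightarrow> 'v) \<Rightarrow> ('v \<Rightarrow> 'v \<Rightarrow> 'v) \<Rightarrow> 'v \<Rightarrow> (lam \<Rightarrow> 'v set) \<Rightarrow> bool"
where
  "simple_framed_algebra l r smul mul one S \<longleftrightarrow>
     framed_algebra l r smul mul one S \<and>
     (\<forall>M. is_ideal l r smul mul S M \<longrightarrow> M = {0} \<or> M = UNIV)"

text \<open>Elements of Z_2^{l+r} are represented as subsets of {..<l+r} (their supports);
  addition is symmetric difference, the componentwise product is intersection.\<close>

definition codeword :: "nat \<Rightarrow> nat \<Rightarrow> nat set \<Rightarrow> bool" where
  "codeword l r \<alpha> \<longleftrightarrow> \<alpha> \<subseteq> {..<l+r}"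

definition cadd :: "nat set \<Rightarrow> nat set \<Rightarrow> nat set" where
  "cadd \<alpha> \<beta> = (\<alpha> - \<beta>) \<union> (\<beta> - \<alpha>)"

definition cmul :: "nat set \<Rightarrow> nat set \<Rightarrow> nat set" where
  "cmul \<alpha> \<beta> = \<alpha> \<inter> \<beta>"

definition cwt :: "nat \<Rightarrow> nat \<Rightarrow> nat set \<Rightarrow> int" where
  "cwt l r \<alpha> = int (card (\<alpha> \<inter> {..<l})) - int (card (\<alpha> \<inter> {l..<l+r}))"

text \<open>The degree (d,c) = (0,\<alpha>): coordinate i is 1/2 if \<alpha>_i = 1 and 0 otherwise.\<close>
definition deg0 :: "nat set \<Rightarrow> lam" where
  "deg0 \<alpha> = (\<lambda>i. if i \<in> \<alpha> then Ih else I0)"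

definition CS :: "nat \<Rightarrow> nat \<Rightarrow> (lam \<Rightarrow> 'v::zero set) \<Rightarrow> nat set set" where
  "CS l r S = {\<alpha>. codeword l r \<alpha> \<and> S (deg0 \<alpha>) \<noteq> {0}}"

definition AS0 :: "nat \<Rightarrow> nat \<Rightarrow> (lam \<Rightarrow> 'v::ab_group_add set) \<Rightarrow> 'v set" where
  "AS0 l r S = {(\<Sum>\<alpha>\<in>CS l r S. x \<alpha>) | x. \<forall>\<alpha>\<in>CS l r S. x \<alpha> \<in> S (deg0 \<alpha>)}"

text \<open>Elements are coefficient functions f with f \<alpha> = 0 outside C (f = \<Sum> f \<alpha> e_\<alpha>).\<close>
definition tw_carrier :: "nat set set \<Rightarrow> (nat set \<Rightarrow> complex) set" where
  "tw_carrier C = {f. \<forall>\<alpha>. \<alpha> \<notin> C \<longrightarrow> f \<alpha> = 0}"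

text \<open>e_\<alpha> e_\<beta> = \<epsilon>(\<alpha>,\<beta>) e_{\<alpha>+\<beta>}, extended bilinearly.\<close>
definition tw_mult :: "nat set set \<Rightarrow> (nat set \<Rightarrow> nat set \<Rightarrow> complex) \<Rightarrow>
    (nat set \<Rightarrow> complex) \<Rightarrow> (nat set \<Rightarrow> complex) \<Rightarrow> (nat set \<Rightarrow> complex)" where
  "tw_mult C eps f g = (\<lambda>\<gamma>. \<Sum>(\<alpha>, \<beta>)\<in>{(\<alpha>, \<beta>). \<alpha> \<in> C \<and> \<beta> \<in> C \<and> cadd \<alpha> \<beta> = \<gamma>}.
                                eps \<alpha> \<beta> * f \<alpha> * g \<beta>)"

definition tw_hom :: "nat set set \<Rightarrow> nat set \<Rightarrow> (nat set \<Rightarrow> complex) set" where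
  "tw_hom C \<alpha> = {f \<in> tw_carrier C. \<forall>\<beta>. \<beta> \<noteq> \<alpha> \<longrightarrow> f \<beta> = 0}"

end

theory Submission
  imports Defs
begin

text \<open>Write C for C_S. If 0 \<noteq> x \<in> S(0,\<alpha>) with \<alpha> \<in> C, left multiplication by x is
  injective: FA4 makes its kernel an ideal, and the kernel does not contain 1. Hence each
  S(0,\<alpha>) is a line and C is closed under addition. On degrees (0,\<alpha>) the braiding
  coefficients reduce to (-1)^#(\<alpha> \<inter> \<beta>), so FA4 gives the sign rule
  y x = (-1)^#(\<alpha> \<inter> \<beta>) x y and associativity among homogeneous elements of A_S(0).
  A basis e with e(\<alpha>) e(\<beta>) = \<epsilon>(\<alpha>,\<beta>) e(\<alpha> + \<beta>) is then built along a chain of subgroups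
  H \<subset> H \<union> (g + H): rescale u \<in> S(0,g) so that u u = \<epsilon>(g,g), which is possible over \<complex>,
  and put e(g + h) = \<epsilon>(g,h) u e(h). Bimultiplicativity of \<epsilon> and the commutator condition
  \<epsilon>(\<alpha>,\<beta>) \<epsilon>(\<beta>,\<alpha>) = (-1)^|\<alpha>\<beta>| are exactly what keeps the extended multiplication table
  consistent. Taking coordinates with respect to this basis is the required isomorphism.\<close>

section \<open>Degrees and codewords\<close>

lemma UNIV_isv: "(UNIV :: isv set) = {I0, Ih, Is}"
  using isv.exhaust by auto

lemma finite_Lam: "finite (Lam l r)"
proof -
  have "Lam l r = {\<kappa>. \<forall>i. (i \<in> {..<l+r} \<longrightarrow> \<kappa> i \<in> UNIV) \<and> (i \<notin> {..<l+r} \<longrightarrow> \<kappa> i = I0)}"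
    by (auto simp: Lam_def)
  moreover have "finite {\<kappa>. \<forall>i. (i \<in> {..<l+r} \<longrightarrow> \<kappa> i \<in> UNIV) \<and> (i \<notin> {..<l+r} \<longrightarrow> \<kappa> i = I0)}"
    by (rule finite_set_of_finite_funs) (simp_all add: UNIV_isv)
  ultimately show ?thesis
    by (simp only:)
qed

fun fus_half :: "isv \<Rightarrow> isv" where
  "fus_half I0 = Ih" | "fus_half Ih = I0" | "fus_half Is = Is"

lemma fus_half_fus_half [simp]: "fus_half (fus_half h) = h"
  by (cases h) auto

lemma fus_Ih [simp]: "fus Ih h = {fus_half h}"
  by (cases h) auto

definition fus_deg0 :: "nat set \<Rightarrow> lam \<Rightarrow> lam" where
  "fus_deg0 \<alpha> \<kappa> = (\<lambda>i. if i \<in> \<alpha> then fus_half (\<kappa> i) else \<kappa> i)"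

lemma fus_deg0_fus_deg0 [simp]: "fus_deg0 \<alpha> (fus_deg0 \<alpha> \<kappa>) = \<kappa>"
  by (auto simp: fus_deg0_def)

lemma fus_deg0_deg0: "fus_deg0 \<alpha> (deg0 \<beta>) = deg0 (cadd \<alpha> \<beta>)"
  by (auto simp: fus_deg0_def deg0_def cadd_def fun_eq_iff)

lemma deg0_empty [simp]: "deg0 {} = lam0"
  by (simp add: deg0_def lam0_def)

lemma inj_deg0: "inj deg0"
proof (rule injI)
  fix \<alpha> \<beta> :: "nat set"
  assume eq: "deg0 \<alpha> = deg0 \<beta>"
  have "i \<in> \<alpha> \<longleftrightarrow> i \<in> \<beta>" for i
    using fun_cong[OF eq, of i] by (auto simp: deg0_def split: if_splits)
  then show "\<alpha> = \<beta>"
    by blast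
qed

lemma deg0_in_Lam: "codeword l r \<alpha> \<Longrightarrow> deg0 \<alpha> \<in> Lam l r"
  by (auto simp: codeword_def deg0_def Lam_def)

lemma fus_deg0_in_Lam: "codeword l r \<alpha> \<Longrightarrow> \<kappa> \<in> Lam l r \<Longrightarrow> fus_deg0 \<alpha> \<kappa> \<in> Lam l r"
  by (auto simp: codeword_def fus_deg0_def Lam_def)

lemma lstar_deg0:
  assumes "codeword l r \<alpha>" "\<kappa> \<in> Lam l r"
  shows "lstar l r (deg0 \<alpha>) \<kappa> = {fus_deg0 \<alpha> \<kappa>}"
proof -
  have "\<mu> = fus_deg0 \<alpha> \<kappa>" if "\<mu> \<in> lstar l r (deg0 \<alpha>) \<kappa>" for \<mu>
  proof
    fix i
    show "\<mu> i = fus_deg0 \<alpha> \<kappa> i"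
    proof (cases "i < l + r")
      case True
      then show ?thesis
        using that by (auto simp: lstar_def deg0_def fus_deg0_def split: if_splits)
    next
      case False
      then show ?thesis
        using that assms by (auto simp: lstar_def Lam_def fus_deg0_def codeword_def)
    qed
  qed
  moreover have "fus_deg0 \<alpha> \<kappa> \<in> lstar l r (deg0 \<alpha>) \<kappa>"
    using fus_deg0_in_Lam[OF assms] by (auto simp: lstar_def deg0_def fus_deg0_def)
  ultimately show ?thesis
    by blast
qed

lemma codeword_empty: "codeword l r {}"
  by (simp add: codeword_def)

lemma codeword_cadd: "codeword l r \<alpha> \<Longrightarrow> codeword l r \<beta> \<Longrightarrow> codeword l r (cadd \<alpha> \<beta>)"
  by (auto simp: codeword_def cadd_def)

lemma cadd_commute: "cadd \<alpha> \<beta> = cadd \<beta> \<alpha>"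
  by (auto simp: cadd_def)

lemma cadd_assoc: "cadd (cadd \<alpha> \<beta>) \<gamma> = cadd \<alpha> (cadd \<beta> \<gamma>)"
  by (auto simp: cadd_def)

lemma cadd_left_commute: "cadd \<alpha> (cadd \<beta> \<gamma>) = cadd \<beta> (cadd \<alpha> \<gamma>)"
  by (auto simp: cadd_def)

lemma cadd_self [simp]: "cadd \<alpha> \<alpha> = {}"
  and cadd_empty_right [simp]: "cadd \<alpha> {} = \<alpha>"
  and cadd_cancel_left [simp]: "cadd \<alpha> (cadd \<alpha> \<beta>) = \<beta>"
  by (auto simp: cadd_def)

lemma card_cadd:
  assumes "finite \<alpha>" "finite \<beta>"
  shows "card (cadd \<alpha> \<beta>) + 2 * card (\<alpha> \<inter> \<beta>) = card \<alpha> + card \<beta>"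
proof -
  have "\<alpha> \<union> \<beta> = cadd \<alpha> \<beta> \<union> (\<alpha> \<inter> \<beta>)" and "cadd \<alpha> \<beta> \<inter> (\<alpha> \<inter> \<beta>) = {}"
    by (auto simp: cadd_def)
  then have "card (\<alpha> \<union> \<beta>) = card (cadd \<alpha> \<beta>) + card (\<alpha> \<inter> \<beta>)"
    using assms by (simp add: card_Un_disjoint cadd_def)
  then show ?thesis
    using card_Un_Int[OF assms] by simp
qed

lemma minus_one_power_card_cadd:
  assumes "finite \<alpha>" "finite \<beta>"
  shows "(-1 :: 'a::ring_1) ^ card (cadd \<alpha> \<beta>) = (-1) ^ card \<alpha> * (-1) ^ card \<beta>"
proof -
  have "(-1 :: 'a) ^ card (cadd \<alpha> \<beta>) = (-1) ^ (card (cadd \<alpha> \<beta>) + 2 * card (\<alpha> \<inter> \<beta>))"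
    by (simp add: power_add power_mult)
  then show ?thesis
    by (simp add: card_cadd[OF assms] power_add)
qed

lemma card_codeword_split:
  assumes "codeword l r \<alpha>"
  shows "card \<alpha> = card (\<alpha> \<inter> {..<l}) + card (\<alpha> \<inter> {l..<l+r})"
proof -
  have split: "\<alpha> = (\<alpha> \<inter> {..<l}) \<union> (\<alpha> \<inter> {l..<l+r})"
    using assms by (auto simp: codeword_def)
  have "card ((\<alpha> \<inter> {..<l}) \<union> (\<alpha> \<inter> {l..<l+r})) = card (\<alpha> \<inter> {..<l}) + card (\<alpha> \<inter> {l..<l+r})"
    by (rule card_Un_disjoint) auto
  with arg_cong[OF split, of card] show ?thesis
    by (rule trans)
qed

lemma cwt_sign:
  assumes "codeword l r \<alpha>"
  shows "((-1)::complex) powi (cwt l r \<alpha>) = (-1) ^ card \<alpha>"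
proof -
  have "((-1)::complex) powi (cwt l r \<alpha>) = (-1) ^ card (\<alpha> \<inter> {..<l}) / (-1) ^ card (\<alpha> \<inter> {l..<l+r})"
    unfolding cwt_def by (simp add: power_int_diff)
  also have "\<dots> = (-1) ^ card (\<alpha> \<inter> {..<l}) * (-1) ^ card (\<alpha> \<inter> {l..<l+r})"
    by (cases "even (card (\<alpha> \<inter> {l..<l+r}))") auto
  finally show ?thesis
    by (simp add: card_codeword_split[OF assms] power_add)
qed

lemma lB_deg0:
  assumes "codeword l r \<alpha>" "codeword l r \<beta>"
  shows "lB l r \<kappa> \<kappa>' \<kappa>0 (deg0 \<alpha>) (deg0 \<beta>) \<kappa>3 = (-1) ^ card (\<alpha> \<inter> \<beta>)"
proof -
  define sign :: "nat \<Rightarrow> complex" where "sign i = (if i \<in> \<alpha> \<inter> \<beta> then -1 else 1)" for i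
  have B: "Bis h h' h0 (deg0 \<alpha> i) (deg0 \<beta> i) h3 = sign i" "cnj (sign i) = sign i" for h h' h0 h3 i
    by (auto simp: Bis_def deg0_def sign_def)
  have "lB l r \<kappa> \<kappa>' \<kappa>0 (deg0 \<alpha>) (deg0 \<beta>) \<kappa>3 = (\<Prod>i<l. sign i) * (\<Prod>i\<in>{l..<l+r}. sign i)"
    unfolding lB_def B ..
  also have "\<dots> = (\<Prod>i\<in>{..<l} \<union> {l..<l+r}. sign i)"
    by (rule prod.union_disjoint[symmetric]) auto
  also have "\<dots> = (-1) ^ card {i \<in> {..<l} \<union> {l..<l+r}. i \<in> \<alpha> \<inter> \<beta>}"
    unfolding sign_def by (simp add: prod.inter_filter[symmetric])
  also have "{i \<in> {..<l} \<union> {l..<l+r}. i \<in> \<alpha> \<inter> \<beta>} = \<alpha> \<inter> \<beta>"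
    using assms by (auto simp: codeword_def)
  finally show ?thesis .
qed

section \<open>Framed algebras\<close>

locale framed_alg =
  fixes l r :: nat and smul :: "complex \<Rightarrow> 'v::ab_group_add \<Rightarrow> 'v"
    and mul :: "'v \<Rightarrow> 'v \<Rightarrow> 'v" and one :: 'v and S :: "lam \<Rightarrow> 'v set"
  assumes framed: "framed_algebra l r smul mul one S"
begin

lemma
  shows vector_space: "Vector_Spaces.vector_space smul"
    and graded: "graded l r smul S"
    and mul_add_left: "mul (a + b) c = mul a c + mul b c"
    and mul_add_right: "mul a (b + c) = mul a b + mul a c"
    and mul_smul_left: "mul (smul z a) b = smul z (mul a b)"
    and mul_smul_right: "mul a (smul z b) = smul z (mul a b)"
    and one_neq_zero: "one \<noteq> 0"
    and one_in_S: "one \<in> S lam0"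
    and S_lam0: "S lam0 = {smul z one | z. True}"
    and one_mul [simp]: "mul one a = a"
    and mul_one [simp]: "mul a one = a"
  using framed unfolding framed_algebra_def by auto

lemma FA3:
  assumes "\<kappa>1 \<in> Lam l r" "\<kappa>2 \<in> Lam l r" "a \<in> S \<kappa>1" "b \<in> S \<kappa>2" "\<kappa> \<in> Lam l r"
    and "\<kappa> \<notin> lstar l r \<kappa>1 \<kappa>2"
  shows "comp l r S \<kappa> (mul a b) = 0"
  using framed assms unfolding framed_algebra_def by blast

lemma FA4:
  assumes "\<kappa>0 \<in> Lam l r" "\<kappa>1 \<in> Lam l r" "\<kappa>2 \<in> Lam l r" "\<kappa>3 \<in> Lam l r"
    and "a1 \<in> S \<kappa>1" "a2 \<in> S \<kappa>2" "a3 \<in> S \<kappa>3" "\<kappa>' \<in> lA l r \<kappa>0 \<kappa>2 \<kappa>1 \<kappa>3"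
  shows "comp l r S \<kappa>0 (mul a2 (comp l r S \<kappa>' (mul a1 a3))) =
    (\<Sum>\<kappa>\<in>lA l r \<kappa>0 \<kappa>1 \<kappa>2 \<kappa>3.
       smul (lB l r \<kappa> \<kappa>' \<kappa>0 \<kappa>1 \<kappa>2 \<kappa>3) (comp l r S \<kappa>0 (mul a1 (comp l r S \<kappa> (mul a2 a3)))))"
  using framed assms unfolding framed_algebra_def by blast

sublocale vs: vector_space smul
  by (rule vector_space)

lemma subspace_S: "\<kappa> \<in> Lam l r \<Longrightarrow> vs.subspace (S \<kappa>)"
  using graded by (simp add: graded_def)

lemma zero_in_S: "\<kappa> \<in> Lam l r \<Longrightarrow> 0 \<in> S \<kappa>"
  using subspace_S vs.subspace_0 by blast

lemma add_in_S: "\<kappa> \<in> Lam l r \<Longrightarrow> x \<in> S \<kappa> \<Longrightarrow> y \<in> S \<kappa> \<Longrightarrow> x + y \<in> S \<kappa>"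
  using subspace_S vs.subspace_add by blast

lemma smul_in_S: "\<kappa> \<in> Lam l r \<Longrightarrow> x \<in> S \<kappa> \<Longrightarrow> smul z x \<in> S \<kappa>"
  using subspace_S vs.subspace_scale by blast

sublocale mul_left: additive "\<lambda>a. mul a b" for b
  by standard (rule mul_add_left)

sublocale mul_right: additive "\<lambda>b. mul a b" for a
  by standard (rule mul_add_right)

abbreviation decomposition :: "'v \<Rightarrow> (lam \<Rightarrow> 'v) \<Rightarrow> bool" where
  "decomposition v f \<equiv> (\<forall>\<kappa>. \<kappa> \<notin> Lam l r \<longrightarrow> f \<kappa> = 0) \<and> (\<forall>\<kappa>\<in>Lam l r. f \<kappa> \<in> S \<kappa>) \<and>
     v = (\<Sum>\<kappa>\<in>Lam l r. f \<kappa>)"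

lemma comp_decomposition: "decomposition v (\<lambda>\<kappa>. comp l r S \<kappa> v)"
  using theI'[of "decomposition v"] graded unfolding graded_def comp_def by blast

lemma comp_eqI: "decomposition v f \<Longrightarrow> comp l r S \<kappa> v = f \<kappa>"
  using the1_equality[of "decomposition v" f] graded unfolding graded_def comp_def by auto

lemma comp_in_S: "\<kappa> \<in> Lam l r \<Longrightarrow> comp l r S \<kappa> v \<in> S \<kappa>"
  using comp_decomposition by blast

lemma sum_comp: "(\<Sum>\<kappa>\<in>Lam l r. comp l r S \<kappa> v) = v"
  using comp_decomposition by metis

lemma comp_homogeneous:
  assumes "\<kappa> \<in> Lam l r" "v \<in> S \<kappa>"
  shows "comp l r S \<mu> v = (if \<mu> = \<kappa> then v else 0)"
  by (rule comp_eqI) (use assms zero_in_S finite_Lam in auto)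

lemma comp_add: "comp l r S \<kappa> (u + v) = comp l r S \<kappa> u + comp l r S \<kappa> v"
proof (rule comp_eqI, intro conjI)
  show "u + v = (\<Sum>\<kappa>\<in>Lam l r. comp l r S \<kappa> u + comp l r S \<kappa> v)"
    by (simp add: sum.distrib sum_comp)
qed (use comp_decomposition add_in_S in auto)

sublocale comp: additive "comp l r S \<kappa>" for \<kappa>
  by standard (rule comp_add)

declare comp.zero [simp] mul_left.zero [simp] mul_right.zero [simp]

lemma eq_zero_if_comp_eq_zero: "(\<And>\<kappa>. \<kappa> \<in> Lam l r \<Longrightarrow> comp l r S \<kappa> v = 0) \<Longrightarrow> v = 0"
  by (metis sum.neutral sum_comp)

lemma mul_in_S_if_lstar_singleton:
  assumes "\<kappa>1 \<in> Lam l r" "\<kappa>2 \<in> Lam l r" "a \<in> S \<kappa>1" "b \<in> S \<kappa>2" "lstar l r \<kappa>1 \<kappa>2 = {\<kappa>}"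
  shows "mul a b \<in> S \<kappa>"
proof -
  have \<kappa>: "\<kappa> \<in> Lam l r"
    using assms(5) by (auto simp: lstar_def)
  have "mul a b = (\<Sum>\<mu>\<in>Lam l r. if \<mu> = \<kappa> then comp l r S \<kappa> (mul a b) else 0)"
    by (subst sum_comp[symmetric], rule sum.cong) (use assms FA3 in auto)
  also have "\<dots> = comp l r S \<kappa> (mul a b)"
    using \<kappa> finite_Lam by simp
  finally show ?thesis
    using comp_in_S[OF \<kappa>] by metis
qed

lemma mul_deg0_in_S:
  assumes "codeword l r \<alpha>" "x \<in> S (deg0 \<alpha>)" "\<kappa> \<in> Lam l r" "y \<in> S \<kappa>"
  shows "mul x y \<in> S (fus_deg0 \<alpha> \<kappa>)"
  using assms by (intro mul_in_S_if_lstar_singleton[of "deg0 \<alpha>" \<kappa>] deg0_in_Lam lstar_deg0)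

lemma mul_deg0_deg0_in_S:
  assumes "codeword l r \<alpha>" "codeword l r \<beta>" "x \<in> S (deg0 \<alpha>)" "y \<in> S (deg0 \<beta>)"
  shows "mul x y \<in> S (deg0 (cadd \<alpha> \<beta>))"
  using mul_deg0_in_S[OF assms(1,3) deg0_in_Lam[OF assms(2)] assms(4)] by (simp add: fus_deg0_deg0)

lemma comp_mul_deg0:
  assumes "codeword l r \<alpha>" "x \<in> S (deg0 \<alpha>)" "\<kappa> \<in> Lam l r"
  shows "comp l r S \<kappa> (mul x y) = comp l r S \<kappa> (mul x (comp l r S (fus_deg0 \<alpha> \<kappa>) y))"
proof -
  have "comp l r S \<kappa> (mul x y) = (\<Sum>\<mu>\<in>Lam l r. comp l r S \<kappa> (mul x (comp l r S \<mu> y)))"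
    by (subst (1) sum_comp[symmetric, of y]) (simp add: mul_right.sum comp.sum)
  also have "\<dots> = (\<Sum>\<mu>\<in>Lam l r.
      if \<mu> = fus_deg0 \<alpha> \<kappa> then comp l r S \<kappa> (mul x (comp l r S (fus_deg0 \<alpha> \<kappa>) y)) else 0)"
  proof (rule sum.cong)
    fix \<mu>
    assume \<mu>: "\<mu> \<in> Lam l r"
    have "mul x (comp l r S \<mu> y) \<in> S (fus_deg0 \<alpha> \<mu>)"
      by (rule mul_deg0_in_S[OF assms(1,2) \<mu> comp_in_S[OF \<mu>]])
    then show "comp l r S \<kappa> (mul x (comp l r S \<mu> y)) =
      (if \<mu> = fus_deg0 \<alpha> \<kappa> then comp l r S \<kappa> (mul x (comp l r S (fus_deg0 \<alpha> \<kappa>) y)) else 0)"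
      using comp_homogeneous[OF fus_deg0_in_Lam[OF assms(1) \<mu>]] by auto
  qed simp
  also have "\<dots> = comp l r S \<kappa> (mul x (comp l r S (fus_deg0 \<alpha> \<kappa>) y))"
    using fus_deg0_in_Lam[OF assms(1,3)] finite_Lam by simp
  finally show ?thesis .
qed

lemma mul_deg0_mul_eq_zero:
  assumes \<alpha>: "codeword l r \<alpha>" and x: "x \<in> S (deg0 \<alpha>)"
    and b: "\<kappa>1 \<in> Lam l r" "b \<in> S \<kappa>1" and m: "\<kappa>3 \<in> Lam l r" "m \<in> S \<kappa>3"
    and xm: "mul x m = 0"
  shows "mul x (mul b m) = 0"
proof (rule eq_zero_if_comp_eq_zero)
  txt \<open>FA4 moves x past b, where it annihilates m.\<close>
  fix \<kappa>0
  assume \<kappa>0: "\<kappa>0 \<in> Lam l r"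
  define \<kappa>' where "\<kappa>' = fus_deg0 \<alpha> \<kappa>0"
  have \<kappa>': "\<kappa>' \<in> Lam l r"
    unfolding \<kappa>'_def using fus_deg0_in_Lam[OF \<alpha> \<kappa>0] .
  have "comp l r S \<kappa>0 (mul x (mul b m)) = comp l r S \<kappa>0 (mul x (comp l r S \<kappa>' (mul b m)))"
    unfolding \<kappa>'_def by (rule comp_mul_deg0[OF \<alpha> x \<kappa>0])
  also have "\<dots> = 0"
  proof (cases "\<kappa>' \<in> lstar l r \<kappa>1 \<kappa>3")
    case True
    then have "\<kappa>' \<in> lA l r \<kappa>0 (deg0 \<alpha>) \<kappa>1 \<kappa>3"
      using lstar_deg0[OF \<alpha> \<kappa>'] by (simp add: lA_def \<kappa>'_def)
    then show ?thesis
      using FA4[OF \<kappa>0 b(1) deg0_in_Lam[OF \<alpha>] m(1) b(2) x m(2)] xm by simp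
  next
    case False
    then show ?thesis
      using FA3[OF b(1) m(1) b(2) m(2) \<kappa>'] by simp
  qed
  finally show "comp l r S \<kappa>0 (mul x (mul b m)) = 0" .
qed

lemma is_ideal_annihilator:
  assumes \<alpha>: "codeword l r \<alpha>" and x: "x \<in> S (deg0 \<alpha>)"
  shows "is_ideal l r smul mul S {m. mul x m = 0}"
proof -
  have comp_closed: "mul x (comp l r S \<kappa> m) = 0" if m: "mul x m = 0" and \<kappa>: "\<kappa> \<in> Lam l r" for m \<kappa>
  proof -
    have \<kappa>': "fus_deg0 \<alpha> \<kappa> \<in> Lam l r"
      using fus_deg0_in_Lam[OF \<alpha> \<kappa>] .
    have "mul x (comp l r S \<kappa> m) = comp l r S (fus_deg0 \<alpha> \<kappa>) (mul x (comp l r S \<kappa> m))"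
      using comp_homogeneous[OF \<kappa>' mul_deg0_in_S[OF \<alpha> x \<kappa> comp_in_S[OF \<kappa>]]] by simp
    also have "\<dots> = comp l r S (fus_deg0 \<alpha> \<kappa>) (mul x m)"
      using comp_mul_deg0[OF \<alpha> x \<kappa>'] by simp
    finally show ?thesis
      using m by simp
  qed
  have mul_closed: "mul x (mul b m) = 0" if m: "mul x m = 0" for b m
  proof -
    have "mul x (mul b m) =
        (\<Sum>\<kappa>3\<in>Lam l r. \<Sum>\<kappa>1\<in>Lam l r. mul x (mul (comp l r S \<kappa>1 b) (comp l r S \<kappa>3 m)))"
      by (subst (1 2) sum_comp[symmetric]) (simp add: mul_left.sum mul_right.sum)
    also have "\<dots> = 0"
      using mul_deg0_mul_eq_zero[OF \<alpha> x _ comp_in_S _ comp_in_S comp_closed[OF m]]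
      by (simp add: sum.neutral)
    finally show ?thesis .
  qed
  have "vs.subspace {m. mul x m = 0}"
    by (simp add: vs.subspace_def mul_add_right mul_smul_right)
  then show ?thesis
    using comp_closed mul_closed by (simp add: is_ideal_def)
qed

lemma lA_deg0:
  assumes "codeword l r \<alpha>" "codeword l r \<beta>" "codeword l r \<gamma>"
  shows "lA l r (deg0 \<delta>) (deg0 \<alpha>) (deg0 \<beta>) (deg0 \<gamma>) =
    (if \<delta> = cadd \<alpha> (cadd \<beta> \<gamma>) then {deg0 (cadd \<beta> \<gamma>)} else {})"
  using assms inj_deg0[THEN injD]
  by (auto simp: lA_def lstar_deg0 deg0_in_Lam codeword_cadd fus_deg0_deg0)

lemma mul_deg0_braid:
  assumes cw: "codeword l r \<alpha>" "codeword l r \<beta>" "codeword l r \<gamma>"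
    and x: "x \<in> S (deg0 \<alpha>)" and y: "y \<in> S (deg0 \<beta>)" and z: "z \<in> S (deg0 \<gamma>)"
  shows "mul y (mul x z) = smul ((-1) ^ card (\<alpha> \<inter> \<beta>)) (mul x (mul y z))"
proof -
  define \<delta> where "\<delta> = cadd \<alpha> (cadd \<beta> \<gamma>)"
  have cw': "codeword l r (cadd \<alpha> \<gamma>)" "codeword l r (cadd \<beta> \<gamma>)" "codeword l r \<delta>"
    using cw by (simp_all add: codeword_cadd \<delta>_def)
  have xz: "mul x z \<in> S (deg0 (cadd \<alpha> \<gamma>))" and yz: "mul y z \<in> S (deg0 (cadd \<beta> \<gamma>))"
    using mul_deg0_deg0_in_S cw x y z by blast+
  have "mul y (mul x z) \<in> S (deg0 \<delta>)" and "mul x (mul y z) \<in> S (deg0 \<delta>)"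
    using mul_deg0_deg0_in_S[OF cw(2) cw'(1) y xz] mul_deg0_deg0_in_S[OF cw(1) cw'(2) x yz]
    by (simp_all add: \<delta>_def cadd_left_commute)
  moreover have "deg0 (cadd \<alpha> \<gamma>) \<in> lA l r (deg0 \<delta>) (deg0 \<beta>) (deg0 \<alpha>) (deg0 \<gamma>)"
    by (simp add: lA_deg0 cw \<delta>_def cadd_left_commute)
  note FA4[OF deg0_in_Lam[OF cw'(3)] deg0_in_Lam[OF cw(1)] deg0_in_Lam[OF cw(2)]
      deg0_in_Lam[OF cw(3)] x y z this]
  ultimately show ?thesis
    using comp_homogeneous[OF deg0_in_Lam[OF cw'(1)] xz] comp_homogeneous[OF deg0_in_Lam[OF cw'(2)] yz]
      comp_homogeneous[OF deg0_in_Lam[OF cw'(3)]]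
    by (simp add: lA_deg0 cw \<delta>_def lB_deg0)
qed

lemma mul_deg0_commute:
  assumes "codeword l r \<alpha>" "codeword l r \<beta>" "x \<in> S (deg0 \<alpha>)" "y \<in> S (deg0 \<beta>)"
  shows "mul y x = smul ((-1) ^ card (\<alpha> \<inter> \<beta>)) (mul x y)"
  using mul_deg0_braid[OF assms(1,2) codeword_empty assms(3,4), of one] one_in_S by simp

lemma mul_deg0_same_scalar:
  assumes "codeword l r \<alpha>" "x \<in> S (deg0 \<alpha>)" "y \<in> S (deg0 \<alpha>)"
  shows "\<exists>z. mul x y = smul z one"
  using mul_deg0_deg0_in_S[OF assms(1,1,2,3)] S_lam0 by auto

lemma mul_deg0_assoc:
  assumes cw: "codeword l r \<alpha>" "codeword l r \<beta>" "codeword l r \<gamma>"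
    and x: "x \<in> S (deg0 \<alpha>)" and y: "y \<in> S (deg0 \<beta>)" and z: "z \<in> S (deg0 \<gamma>)"
  shows "mul (mul x y) z = mul x (mul y z)"
proof -
  txt \<open>Both sides are related to z (x y) by moving z to the front; the two signs agree
    because #((\<alpha> + \<beta>) \<inter> \<gamma>) and #(\<alpha> \<inter> \<gamma>) + #(\<beta> \<inter> \<gamma>) have the same parity.\<close>
  let ?sign = "\<lambda>A. (-1 :: complex) ^ card A"
  have xy: "mul x y \<in> S (deg0 (cadd \<alpha> \<beta>))"
    by (rule mul_deg0_deg0_in_S[OF cw(1,2) x y])
  have sign: "?sign (cadd \<alpha> \<beta> \<inter> \<gamma>) = ?sign (\<alpha> \<inter> \<gamma>) * ?sign (\<beta> \<inter> \<gamma>)"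
  proof -
    have "cadd \<alpha> \<beta> \<inter> \<gamma> = cadd (\<alpha> \<inter> \<gamma>) (\<beta> \<inter> \<gamma>)"
      by (auto simp: cadd_def)
    moreover have "finite \<alpha>" "finite \<beta>"
      using cw by (auto simp: codeword_def finite_subset)
    ultimately show ?thesis
      by (simp add: minus_one_power_card_cadd)
  qed
  have "mul (mul x y) z = smul (?sign (cadd \<alpha> \<beta> \<inter> \<gamma>)) (mul z (mul x y))"
    using mul_deg0_commute[OF codeword_cadd[OF cw(1,2)] cw(3) xy z] by simp
  also have "mul z (mul x y) = smul (?sign (\<alpha> \<inter> \<gamma>)) (mul x (mul z y))"
    by (rule mul_deg0_braid[OF cw(1,3,2) x z y])
  also have "mul z y = smul (?sign (\<beta> \<inter> \<gamma>)) (mul y z)"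
    by (rule mul_deg0_commute[OF cw(2,3) y z])
  finally show ?thesis
    by (simp add: sign mul_smul_right mult_ac)
qed

end

lemma finite_CS: "finite (CS l r S)"
  by (rule finite_subset[of _ "Pow {..<l+r}"]) (auto simp: CS_def codeword_def)

lemma codeword_if_in_CS: "\<alpha> \<in> CS l r S \<Longrightarrow> codeword l r \<alpha>"
  by (simp add: CS_def)

locale simple_framed_alg = framed_alg +
  assumes trivial_ideals: "\<forall>M. is_ideal l r smul mul S M \<longrightarrow> M = {0} \<or> M = UNIV"
begin

lemma mul_deg0_eq_zero_iff:
  assumes "codeword l r \<alpha>" "x \<in> S (deg0 \<alpha>)" "x \<noteq> 0"
  shows "mul x m = 0 \<longleftrightarrow> m = 0"
proof -
  have "{m. mul x m = 0} = {0} \<or> {m. mul x m = 0} = UNIV"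
    using trivial_ideals is_ideal_annihilator[OF assms(1,2)] by blast
  moreover have "one \<notin> {m. mul x m = 0}"
    using assms(3) by simp
  ultimately have "{m. mul x m = 0} = {0}"
    by blast
  then show ?thesis
    by blast
qed

lemma mul_deg0_self_scalar:
  assumes \<alpha>: "codeword l r \<alpha>" and x: "x \<in> S (deg0 \<alpha>)" "x \<noteq> 0"
  obtains c where "c \<noteq> 0" "mul x x = smul c one"
proof -
  obtain c where c: "mul x x = smul c one"
    using mul_deg0_same_scalar[OF \<alpha> x(1) x(1)] by blast
  moreover have "c \<noteq> 0"
  proof
    assume "c = 0"
    then have "mul x x = 0"
      using c by simp
    then show False
      using mul_deg0_eq_zero_iff[OF \<alpha> x] x(2) by simp
  qed
  ultimately show ?thesis
    using that by blast
qed

lemma deg0_one_dimensional: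
  assumes \<alpha>: "codeword l r \<alpha>" and x: "x \<in> S (deg0 \<alpha>)" "x \<noteq> 0" and y: "y \<in> S (deg0 \<alpha>)"
  shows "\<exists>z. y = smul z x"
proof -
  obtain c where c: "c \<noteq> 0" "mul x x = smul c one"
    using mul_deg0_self_scalar[OF \<alpha> x] .
  obtain d where d: "mul x y = smul d one"
    using mul_deg0_same_scalar[OF \<alpha> x(1) y] by blast
  have "mul x (y - smul (d / c) x) = 0"
    using c by (simp add: mul_right.diff mul_smul_right d)
  then have "y = smul (d / c) x"
    using mul_deg0_eq_zero_iff[OF \<alpha> x] by simp
  then show ?thesis ..
qed

lemma ex_deg0_square:
  assumes \<alpha>: "\<alpha> \<in> CS l r S" and "c \<noteq> 0"
  shows "\<exists>u \<in> S (deg0 \<alpha>). u \<noteq> 0 \<and> mul u u = smul c one"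
proof -
  have cw: "codeword l r \<alpha>"
    using \<alpha> by (rule codeword_if_in_CS)
  obtain x where x: "x \<in> S (deg0 \<alpha>)" "x \<noteq> 0"
    using \<alpha> zero_in_S[OF deg0_in_Lam[OF cw]] by (auto simp: CS_def)
  obtain d where d: "d \<noteq> 0" "mul x x = smul d one"
    using mul_deg0_self_scalar[OF cw x] .
  define t where "t = csqrt (c / d)"
  have t: "t * t * d = c"
    using d(1) power2_csqrt[of "c / d"] by (simp add: t_def power2_eq_square)
  then have "t \<noteq> 0"
    using assms(2) by auto
  have "mul (smul t x) (smul t x) = smul c one"
    by (simp add: mul_smul_left mul_smul_right d(2) t[symmetric] mult.commute)
  moreover have "smul t x \<in> S (deg0 \<alpha>)" "smul t x \<noteq> 0"
    using x \<open>t \<noteq> 0\<close> smul_in_S[OF deg0_in_Lam[OF cw]] by auto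
  ultimately show ?thesis
    by blast
qed

lemma empty_in_CS: "{} \<in> CS l r S"
  using one_in_S one_neq_zero by (auto simp: CS_def codeword_def)

lemma cadd_in_CS:
  assumes "\<alpha> \<in> CS l r S" "\<beta> \<in> CS l r S"
  shows "cadd \<alpha> \<beta> \<in> CS l r S"
proof -
  have cw: "codeword l r \<alpha>" "codeword l r \<beta>"
    using assms by (simp_all add: codeword_if_in_CS)
  obtain x y where "x \<in> S (deg0 \<alpha>)" "x \<noteq> 0" "y \<in> S (deg0 \<beta>)" "y \<noteq> 0"
    using assms zero_in_S[OF deg0_in_Lam] by (auto simp: CS_def)
  then have "mul x y \<in> S (deg0 (cadd \<alpha> \<beta>))" "mul x y \<noteq> 0"
    using mul_deg0_deg0_in_S[OF cw] mul_deg0_eq_zero_iff[OF cw(1)] by auto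
  then show ?thesis
    using codeword_cadd[OF cw] by (auto simp: CS_def)
qed

end

section \<open>Twisted bases\<close>

definition cadd_subgroup :: "nat set set \<Rightarrow> nat set set \<Rightarrow> bool" where
  "cadd_subgroup H C \<longleftrightarrow> H \<subseteq> C \<and> {} \<in> H \<and> (\<forall>\<alpha>\<in>H. \<forall>\<beta>\<in>H. cadd \<alpha> \<beta> \<in> H)"

lemma cadd_subgroup_trivial: "{} \<in> C \<Longrightarrow> cadd_subgroup {{}} C"
  by (simp add: cadd_subgroup_def)

lemma cadd_subgroup_coset_disjoint:
  assumes "cadd_subgroup H C" "g \<notin> H" "h \<in> H"
  shows "cadd g h \<notin> H"
  using assms cadd_cancel_left[of h g] unfolding cadd_subgroup_def by (metis cadd_commute)

lemma cadd_subgroup_coset_extension: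
  assumes H: "cadd_subgroup H C" and g: "g \<in> C"
    and C: "\<And>\<alpha> \<beta>. \<alpha> \<in> C \<Longrightarrow> \<beta> \<in> C \<Longrightarrow> cadd \<alpha> \<beta> \<in> C"
  shows "cadd_subgroup (H \<union> cadd g ` H) C"
proof -
  have H_closed: "cadd a b \<in> H" if "a \<in> H" "b \<in> H" for a b
    using H that by (simp add: cadd_subgroup_def)
  have "cadd \<alpha> \<beta> \<in> H \<union> cadd g ` H"
    if \<alpha>\<beta>: "\<alpha> \<in> H \<union> cadd g ` H" "\<beta> \<in> H \<union> cadd g ` H" for \<alpha> \<beta>
  proof -
    obtain a b where ab: "a \<in> H" "b \<in> H" "\<alpha> = a \<or> \<alpha> = cadd g a" "\<beta> = b \<or> \<beta> = cadd g b"
      using \<alpha>\<beta> by blast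
    have "cadd \<alpha> \<beta> = cadd a b \<or> cadd \<alpha> \<beta> = cadd g (cadd a b)"
      using ab(3,4) by (auto simp: cadd_def)
    then show ?thesis
      using H_closed[OF ab(1,2)] by auto
  qed
  moreover have "H \<union> cadd g ` H \<subseteq> C" "{} \<in> H"
    using H g C by (auto simp: cadd_subgroup_def)
  ultimately show ?thesis
    by (simp add: cadd_subgroup_def)
qed

lemma tw_mult_in_tw_carrier:
  assumes "\<And>\<alpha> \<beta>. \<alpha> \<in> C \<Longrightarrow> \<beta> \<in> C \<Longrightarrow> cadd \<alpha> \<beta> \<in> C"
  shows "tw_mult C eps f g \<in> tw_carrier C"
proof -
  have "tw_mult C eps f g \<gamma> = 0" if "\<gamma> \<notin> C" for \<gamma>
  proof -
    have "{(\<alpha>, \<beta>). \<alpha> \<in> C \<and> \<beta> \<in> C \<and> cadd \<alpha> \<beta> = \<gamma>} = {}"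
      using assms that by auto
    then show ?thesis
      by (simp only: tw_mult_def sum.empty)
  qed
  then show ?thesis
    by (simp add: tw_carrier_def)
qed

locale twisted_framed_alg = simple_framed_alg +
  fixes eps :: "nat set \<Rightarrow> nat set \<Rightarrow> complex"
  assumes eps_pm: "\<alpha> \<in> CS l r S \<Longrightarrow> \<beta> \<in> CS l r S \<Longrightarrow> eps \<alpha> \<beta> \<in> {1, -1}"
    and eps_cadd_left: "\<alpha> \<in> CS l r S \<Longrightarrow> \<beta> \<in> CS l r S \<Longrightarrow> \<gamma> \<in> CS l r S \<Longrightarrow>
      eps (cadd \<alpha> \<beta>) \<gamma> = eps \<alpha> \<gamma> * eps \<beta> \<gamma>"
    and eps_cadd_right: "\<alpha> \<in> CS l r S \<Longrightarrow> \<beta> \<in> CS l r S \<Longrightarrow> \<gamma> \<in> CS l r S \<Longrightarrow>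
      eps \<alpha> (cadd \<beta> \<gamma>) = eps \<alpha> \<beta> * eps \<alpha> \<gamma>"
    and eps_commutator: "\<alpha> \<in> CS l r S \<Longrightarrow> \<beta> \<in> CS l r S \<Longrightarrow>
      eps \<alpha> \<beta> * eps \<beta> \<alpha> = (-1) powi (cwt l r (cmul \<alpha> \<beta>))"
begin

lemma eps_neq_zero: "\<alpha> \<in> CS l r S \<Longrightarrow> \<beta> \<in> CS l r S \<Longrightarrow> eps \<alpha> \<beta> \<noteq> 0"
  using eps_pm by fastforce

lemma eps_empty: "eps {} {} = 1"
proof -
  have "eps {} {} = eps {} {} * eps {} {}"
    using eps_cadd_left[OF empty_in_CS empty_in_CS empty_in_CS] by simp
  then show ?thesis
    using eps_neq_zero[OF empty_in_CS empty_in_CS] by simp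
qed

lemma sign_eq_eps_commutator:
  assumes "\<alpha> \<in> CS l r S" "\<beta> \<in> CS l r S"
  shows "(-1) ^ card (\<alpha> \<inter> \<beta>) = eps \<alpha> \<beta> * eps \<beta> \<alpha>"
proof -
  have "codeword l r (\<alpha> \<inter> \<beta>)"
    using codeword_if_in_CS[OF assms(1)] by (auto simp: codeword_def)
  then show ?thesis
    using eps_commutator[OF assms] cwt_sign by (simp add: cmul_def)
qed

lemma eps_mult_self [simp]:
  assumes "\<alpha> \<in> CS l r S" "\<beta> \<in> CS l r S"
  shows "eps \<alpha> \<beta> * eps \<alpha> \<beta> = 1" and "eps \<alpha> \<beta> * (eps \<alpha> \<beta> * z) = z"
  using eps_pm[OF assms] by (auto simp: mult.assoc[symmetric])

definition twisted_basis :: "nat set set \<Rightarrow> (nat set \<Rightarrow> _) \<Rightarrow> bool" where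
  "twisted_basis H e \<longleftrightarrow> (\<forall>\<alpha>\<in>H. e \<alpha> \<in> S (deg0 \<alpha>) \<and> e \<alpha> \<noteq> 0) \<and>
     (\<forall>\<alpha>\<in>H. \<forall>\<beta>\<in>H. mul (e \<alpha>) (e \<beta>) = smul (eps \<alpha> \<beta>) (e (cadd \<alpha> \<beta>)))"

lemma twisted_basis_trivial: "twisted_basis {{}} (\<lambda>_. one)"
  using one_in_S one_neq_zero eps_empty by (simp add: twisted_basis_def)

text \<open>For \<alpha> = g + h with h \<in> H this is \<epsilon>(g,h) u e(h), since cadd g \<alpha> = h.\<close>

definition coset_extension ::
  "nat set set \<Rightarrow> (nat set \<Rightarrow> _) \<Rightarrow> nat set \<Rightarrow> _ \<Rightarrow> nat set \<Rightarrow> _" where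
  "coset_extension H e g u \<alpha> =
    (if \<alpha> \<in> H then e \<alpha> else smul (eps g (cadd g \<alpha>)) (mul u (e (cadd g \<alpha>))))"

context
  fixes H e g u
  assumes H: "cadd_subgroup H (CS l r S)" and e: "twisted_basis H e"
    and g: "g \<in> CS l r S" "g \<notin> H"
    and u: "u \<in> S (deg0 g)" "u \<noteq> 0" "mul u u = smul (eps g g) one"
begin

lemma basis_vector_deg0:
  assumes "h \<in> H"
  shows "h \<in> CS l r S" "codeword l r h" "e h \<in> S (deg0 h)" "e h \<noteq> 0"
  using assms H e by (auto simp: cadd_subgroup_def twisted_basis_def CS_def)

lemma basis_mul:
  assumes "h \<in> H" "h' \<in> H"
  shows "cadd h h' \<in> H" "mul (e h) (e h') = smul (eps h h') (e (cadd h h'))"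
  using assms H e by (auto simp: cadd_subgroup_def twisted_basis_def)

lemma mul_basis_u_basis:
  assumes h: "h \<in> H" and h': "h' \<in> H"
  shows "mul (e h) (mul u (e h')) = smul (eps g h * eps h g * eps h h') (mul u (e (cadd h h')))"
proof -
  have "mul (e h) (mul u (e h')) = smul ((-1) ^ card (g \<inter> h)) (mul u (mul (e h) (e h')))"
    using mul_deg0_braid codeword_if_in_CS[OF g(1)] basis_vector_deg0[OF h] basis_vector_deg0[OF h'] u(1)
    by blast
  then show ?thesis
    using basis_mul[OF h h'] sign_eq_eps_commutator[OF g(1) basis_vector_deg0(1)[OF h]]
    by (simp add: mul_smul_right mult.assoc)
qed

lemma mul_u_basis_basis:
  assumes h: "h \<in> H" and h': "h' \<in> H"
  shows "mul (mul u (e h)) (e h') = smul (eps h h') (mul u (e (cadd h h')))"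
  using mul_deg0_assoc[of g h h' u "e h" "e h'"] codeword_if_in_CS[OF g(1)] u(1)
    basis_vector_deg0[OF h] basis_vector_deg0[OF h'] basis_mul[OF h h']
  by (simp add: mul_smul_right)

lemma mul_u_basis_u_basis:
  assumes h: "h \<in> H" and h': "h' \<in> H"
  shows "mul (mul u (e h)) (mul u (e h')) =
    smul (eps g h * eps h g * eps h h' * eps g g) (e (cadd h h'))"
proof -
  have cw: "codeword l r g" "codeword l r h" "codeword l r h'" "codeword l r (cadd h h')"
    using codeword_if_in_CS[OF g(1)] basis_vector_deg0 basis_mul h h' by auto
  have ue: "mul u (e h') \<in> S (deg0 (cadd g h'))"
    using mul_deg0_deg0_in_S[OF cw(1,3) u(1)] basis_vector_deg0[OF h'] by blast
  have "mul (mul u (e h)) (mul u (e h')) = mul u (mul (e h) (mul u (e h')))"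
    using mul_deg0_assoc[OF cw(1,2) codeword_cadd[OF cw(1,3)] u(1) _ ue] basis_vector_deg0[OF h]
    by blast
  also have "\<dots> = smul (eps g h * eps h g * eps h h') (mul (mul u u) (e (cadd h h')))"
    using mul_deg0_assoc[OF cw(1,1,4) u(1) u(1)] basis_vector_deg0[OF basis_mul(1)[OF h h']]
    by (simp add: mul_basis_u_basis[OF h h'] mul_smul_right)
  finally show ?thesis
    by (simp add: u(3) mul_smul_left)
qed

lemma coset_extension_H: "h \<in> H \<Longrightarrow> coset_extension H e g u h = e h"
  by (simp add: coset_extension_def)

lemma coset_extension_coset:
  "h \<in> H \<Longrightarrow> coset_extension H e g u (cadd g h) = smul (eps g h) (mul u (e h))"
  using cadd_subgroup_coset_disjoint[OF H g(2)] by (simp add: coset_extension_def)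

lemma coset_extension_in_S:
  assumes "\<alpha> \<in> H \<union> cadd g ` H"
  shows "coset_extension H e g u \<alpha> \<in> S (deg0 \<alpha>) \<and> coset_extension H e g u \<alpha> \<noteq> 0"
  using assms
proof
  assume "\<alpha> \<in> H"
  then show ?thesis
    using basis_vector_deg0 coset_extension_H by simp
next
  assume "\<alpha> \<in> cadd g ` H"
  then obtain h where h: "h \<in> H" "\<alpha> = cadd g h"
    by blast
  have cw: "codeword l r g" "codeword l r h"
    using codeword_if_in_CS[OF g(1)] basis_vector_deg0[OF h(1)] by auto
  have "mul u (e h) \<in> S (deg0 \<alpha>)" "mul u (e h) \<noteq> 0"
    using mul_deg0_deg0_in_S[OF cw u(1)] mul_deg0_eq_zero_iff[OF cw(1) u(1,2)]
      basis_vector_deg0[OF h(1)] h(2) by auto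
  then show ?thesis
    using h coset_extension_coset smul_in_S[OF deg0_in_Lam[OF codeword_cadd[OF cw]]]
      eps_neq_zero[OF g(1) basis_vector_deg0(1)] by auto
qed

lemma mul_coset_extension:
  assumes "\<alpha> \<in> H \<union> cadd g ` H" "\<beta> \<in> H \<union> cadd g ` H"
  shows "mul (coset_extension H e g u \<alpha>) (coset_extension H e g u \<beta>) =
    smul (eps \<alpha> \<beta>) (coset_extension H e g u (cadd \<alpha> \<beta>))"
proof -
  obtain h h' where h: "h \<in> H" "h' \<in> H" and cases: "\<alpha> = h \<or> \<alpha> = cadd g h" "\<beta> = h' \<or> \<beta> = cadd g h'"
    using assms by blast
  have in_CS: "g \<in> CS l r S" "h \<in> CS l r S" "h' \<in> CS l r S"
    using g(1) basis_vector_deg0 h by auto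
  have hh': "cadd h h' \<in> H"
    using basis_mul h by blast
  note eps_cadd = eps_cadd_left[OF in_CS(1,2)] eps_cadd_right[OF in_CS(1,2)]
    eps_cadd_left[OF in_CS(1,3)] eps_cadd_right[OF in_CS(1,3)] eps_cadd_left[OF in_CS(2,1)]
    eps_cadd_right[OF in_CS(2,1)] eps_cadd_right[OF in_CS(2,3)] eps_cadd_right[OF in_CS(1,1)]
  note coset = coset_extension_H coset_extension_coset
  from cases show ?thesis
  proof (elim disjE)
    assume "\<alpha> = h" "\<beta> = h'"
    then show ?thesis
      using h hh' by (simp add: coset basis_mul)
  next
    assume "\<alpha> = h" "\<beta> = cadd g h'"
    then show ?thesis
      using h hh' in_CS cadd_in_CS
      by (simp add: coset cadd_left_commute[of h] mul_smul_right mul_basis_u_basis eps_cadd mult_ac)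
  next
    assume "\<alpha> = cadd g h" "\<beta> = h'"
    then show ?thesis
      using h hh' in_CS cadd_in_CS
      by (simp add: coset cadd_assoc mul_smul_left mul_u_basis_basis eps_cadd mult_ac)
  next
    assume "\<alpha> = cadd g h" "\<beta> = cadd g h'"
    moreover have "cadd (cadd g h) (cadd g h') = cadd h h'"
      by (auto simp: cadd_def)
    ultimately show ?thesis
      using h hh' in_CS cadd_in_CS
      by (simp add: coset mul_smul_left mul_smul_right mul_u_basis_u_basis eps_cadd mult_ac)
  qed
qed

lemma twisted_basis_coset_extension: "twisted_basis (H \<union> cadd g ` H) (coset_extension H e g u)"
  using coset_extension_in_S mul_coset_extension by (simp add: twisted_basis_def)

end

lemma twisted_basis_extend:
  assumes "cadd_subgroup H (CS l r S)" "twisted_basis H e" "g \<in> CS l r S" "g \<notin> H"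
  shows "\<exists>e'. twisted_basis (H \<union> cadd g ` H) e'"
proof -
  obtain u where "u \<in> S (deg0 g)" "u \<noteq> 0" "mul u u = smul (eps g g) one"
    using ex_deg0_square[OF assms(3) eps_neq_zero[OF assms(3,3)]] by blast
  then show ?thesis
    using twisted_basis_coset_extension[OF assms] by blast
qed

lemma ex_twisted_basis_extending:
  "cadd_subgroup H (CS l r S) \<Longrightarrow> twisted_basis H e \<Longrightarrow> \<exists>e. twisted_basis (CS l r S) e"
proof (induction "card (CS l r S) - card H" arbitrary: H e rule: less_induct)
  case less
  show ?case
  proof (cases "H = CS l r S")
    case True
    then show ?thesis
      using less.prems by blast
  next
    case False
    then obtain g where g: "g \<in> CS l r S" "g \<notin> H"
      using less.prems(1) by (auto simp: cadd_subgroup_def)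
    let ?H' = "H \<union> cadd g ` H"
    obtain e' where e': "twisted_basis ?H' e'"
      using twisted_basis_extend[OF less.prems g] by blast
    have H': "cadd_subgroup ?H' (CS l r S)"
      using cadd_subgroup_coset_extension[OF less.prems(1) g(1) cadd_in_CS] .
    have "{} \<in> H"
      using less.prems(1) by (simp add: cadd_subgroup_def)
    then have "g \<in> cadd g ` H"
      by (rule image_eqI[where f = "cadd g", OF cadd_empty_right[symmetric]])
    then have psub: "H \<subset> ?H'"
      using g(2) by auto
    have sub: "?H' \<subseteq> CS l r S"
      using H' by (simp add: cadd_subgroup_def)
    have "card H < card ?H'"
      using psubset_card_mono[OF finite_subset[OF sub finite_CS] psub] .
    moreover have "card ?H' \<le> card (CS l r S)"
      using card_mono[OF finite_CS sub] .
    ultimately have "card (CS l r S) - card ?H' < card (CS l r S) - card H"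
      by linarith
    then show ?thesis
      using less.hyps H' e' by blast
  qed
qed

lemma ex_twisted_basis: "\<exists>e. twisted_basis (CS l r S) e"
  using ex_twisted_basis_extending[OF cadd_subgroup_trivial[OF empty_in_CS] twisted_basis_trivial] .

section \<open>Coordinates with respect to a twisted basis\<close>

definition basis_combination :: "(nat set \<Rightarrow> _) \<Rightarrow> (nat set \<Rightarrow> complex) \<Rightarrow> _" where
  "basis_combination e f = (\<Sum>\<alpha>\<in>CS l r S. smul (f \<alpha>) (e \<alpha>))"

lemma comp_deg0_sum:
  assumes "\<beta> \<in> CS l r S" "\<And>\<alpha>. \<alpha> \<in> CS l r S \<Longrightarrow> x \<alpha> \<in> S (deg0 \<alpha>)"
  shows "comp l r S (deg0 \<beta>) (\<Sum>\<alpha>\<in>CS l r S. x \<alpha>) = x \<beta>"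
proof -
  have "comp l r S (deg0 \<beta>) (\<Sum>\<alpha>\<in>CS l r S. x \<alpha>) = (\<Sum>\<alpha>\<in>CS l r S. if \<alpha> = \<beta> then x \<beta> else 0)"
    unfolding comp.sum
  proof (rule sum.cong)
    fix \<alpha>
    assume \<alpha>: "\<alpha> \<in> CS l r S"
    show "comp l r S (deg0 \<beta>) (x \<alpha>) = (if \<alpha> = \<beta> then x \<beta> else 0)"
      using comp_homogeneous[OF deg0_in_Lam[OF codeword_if_in_CS[OF \<alpha>]] assms(2)[OF \<alpha>]]
        inj_deg0[THEN injD] by auto
  qed simp
  also have "\<dots> = x \<beta>"
    using assms(1) finite_CS[of l r S] by simp
  finally show ?thesis .
qed

context
  fixes e
  assumes e: "twisted_basis (CS l r S) e"
begin

lemma smul_basis_in_S: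
  assumes "\<alpha> \<in> CS l r S"
  shows "smul z (e \<alpha>) \<in> S (deg0 \<alpha>)"
  using e assms smul_in_S[OF deg0_in_Lam[OF codeword_if_in_CS[OF assms]]]
  by (simp add: twisted_basis_def)

lemma comp_basis_combination:
  "\<beta> \<in> CS l r S \<Longrightarrow> comp l r S (deg0 \<beta>) (basis_combination e f) = smul (f \<beta>) (e \<beta>)"
  unfolding basis_combination_def by (rule comp_deg0_sum) (simp_all add: smul_basis_in_S)

lemma inj_on_basis_combination: "inj_on (basis_combination e) (tw_carrier (CS l r S))"
proof (rule inj_onI, rule ext)
  fix f g \<beta>
  assume fg: "f \<in> tw_carrier (CS l r S)" "g \<in> tw_carrier (CS l r S)"
    and eq: "basis_combination e f = basis_combination e g"
  show "f \<beta> = g \<beta>"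
  proof (cases "\<beta> \<in> CS l r S")
    case True
    then have "smul (f \<beta>) (e \<beta>) = smul (g \<beta>) (e \<beta>)"
      using comp_basis_combination eq by metis
    moreover have "e \<beta> \<noteq> 0"
      using e True by (simp add: twisted_basis_def)
    ultimately show ?thesis
      by simp
  next
    case False
    then show ?thesis
      using fg by (simp add: tw_carrier_def)
  qed
qed

lemma basis_combination_image: "basis_combination e ` tw_carrier (CS l r S) = AS0 l r S"
proof
  show "basis_combination e ` tw_carrier (CS l r S) \<subseteq> AS0 l r S"
    using smul_basis_in_S by (auto simp: AS0_def basis_combination_def)
next
  show "AS0 l r S \<subseteq> basis_combination e ` tw_carrier (CS l r S)"
  proof
    fix v
    assume "v \<in> AS0 l r S"
    then obtain x where v: "v = (\<Sum>\<alpha>\<in>CS l r S. x \<alpha>)" and x: "\<forall>\<alpha>\<in>CS l r S. x \<alpha> \<in> S (deg0 \<alpha>)"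
      unfolding AS0_def by blast
    have "\<exists>z. x \<alpha> = smul z (e \<alpha>)" if \<alpha>: "\<alpha> \<in> CS l r S" for \<alpha>
      using deg0_one_dimensional[OF codeword_if_in_CS[OF \<alpha>]] e \<alpha> x by (simp add: twisted_basis_def)
    then obtain z where z: "\<forall>\<alpha>\<in>CS l r S. x \<alpha> = smul (z \<alpha>) (e \<alpha>)"
      by metis
    define f where "f \<alpha> = (if \<alpha> \<in> CS l r S then z \<alpha> else 0)" for \<alpha>
    have "f \<in> tw_carrier (CS l r S)"
      by (simp add: f_def tw_carrier_def)
    moreover have "basis_combination e f = v"
      unfolding v basis_combination_def f_def using z by (intro sum.cong) auto
    ultimately show "v \<in> basis_combination e ` tw_carrier (CS l r S)"
      by blast
  qed
qed

lemma basis_combination_add: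
  "basis_combination e (\<lambda>\<alpha>. f \<alpha> + g \<alpha>) = basis_combination e f + basis_combination e g"
  by (simp add: basis_combination_def vs.scale_left_distrib sum.distrib)

lemma basis_combination_scale:
  "basis_combination e (\<lambda>\<alpha>. z * f \<alpha>) = smul z (basis_combination e f)"
  by (simp add: basis_combination_def vs.scale_sum_right)

lemma basis_combination_tw_mult:
  "basis_combination e (tw_mult (CS l r S) eps f g) = mul (basis_combination e f) (basis_combination e g)"
proof -
  define F where "F p = (case p of (\<alpha>, \<beta>) \<Rightarrow> smul (eps \<alpha> \<beta> * f \<alpha> * g \<beta>) (e (cadd \<alpha> \<beta>)))" for p
  have e_mul: "mul (e \<alpha>) (e \<beta>) = smul (eps \<alpha> \<beta>) (e (cadd \<alpha> \<beta>))"
    if "\<alpha> \<in> CS l r S" "\<beta> \<in> CS l r S" for \<alpha> \<beta>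
    using e that by (simp add: twisted_basis_def)
  have "mul (basis_combination e f) (basis_combination e g) =
      (\<Sum>\<beta>\<in>CS l r S. \<Sum>\<alpha>\<in>CS l r S. F (\<alpha>, \<beta>))"
    unfolding basis_combination_def mul_left.sum mul_right.sum
    by (intro sum.cong refl) (simp add: mul_smul_left mul_smul_right e_mul F_def mult_ac)
  also have "\<dots> = (\<Sum>\<alpha>\<in>CS l r S. \<Sum>\<beta>\<in>CS l r S. F (\<alpha>, \<beta>))"
    by (rule sum.swap)
  also have "\<dots> = (\<Sum>p\<in>CS l r S \<times> CS l r S. F p)"
    by (simp add: sum.cartesian_product)
  also have "\<dots> = (\<Sum>\<gamma>\<in>CS l r S. \<Sum>p\<in>{p \<in> CS l r S \<times> CS l r S. case_prod cadd p = \<gamma>}. F p)"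
    by (rule sum.group[symmetric]) (use finite_CS cadd_in_CS in auto)
  also have "\<dots> = basis_combination e (tw_mult (CS l r S) eps f g)"
    unfolding basis_combination_def tw_mult_def
  proof (rule sum.cong[OF refl])
    fix \<gamma>
    have "{p \<in> CS l r S \<times> CS l r S. case_prod cadd p = \<gamma>} =
        {(\<alpha>, \<beta>). \<alpha> \<in> CS l r S \<and> \<beta> \<in> CS l r S \<and> cadd \<alpha> \<beta> = \<gamma>}"
      by auto
    then show "(\<Sum>p\<in>{p \<in> CS l r S \<times> CS l r S. case_prod cadd p = \<gamma>}. F p) =
      smul (\<Sum>(\<alpha>, \<beta>)\<in>{(\<alpha>, \<beta>). \<alpha> \<in> CS l r S \<and> \<beta> \<in> CS l r S \<and> cadd \<alpha> \<beta> = \<gamma>}.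
        eps \<alpha> \<beta> * f \<alpha> * g \<beta>) (e \<gamma>)"
      unfolding vs.scale_sum_left by (auto simp: F_def intro: sum.cong)
  qed
  finally show ?thesis ..
qed

lemma basis_combination_tw_hom:
  assumes \<alpha>: "\<alpha> \<in> CS l r S"
  shows "basis_combination e ` tw_hom (CS l r S) \<alpha> = S (deg0 \<alpha>)"
proof -
  have single: "basis_combination e f = smul (f \<alpha>) (e \<alpha>)" if "f \<in> tw_hom (CS l r S) \<alpha>" for f
  proof -
    have "basis_combination e f = (\<Sum>\<beta>\<in>CS l r S. if \<beta> = \<alpha> then smul (f \<alpha>) (e \<alpha>) else 0)"
      unfolding basis_combination_def using that by (intro sum.cong) (auto simp: tw_hom_def)
    then show ?thesis
      using \<alpha> finite_CS[of l r S] by simp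
  qed
  show ?thesis
  proof
    show "basis_combination e ` tw_hom (CS l r S) \<alpha> \<subseteq> S (deg0 \<alpha>)"
      using single smul_basis_in_S[OF \<alpha>] by auto
  next
    show "S (deg0 \<alpha>) \<subseteq> basis_combination e ` tw_hom (CS l r S) \<alpha>"
    proof
      fix y
      assume "y \<in> S (deg0 \<alpha>)"
      then obtain z where z: "y = smul z (e \<alpha>)"
        using deg0_one_dimensional[OF codeword_if_in_CS[OF \<alpha>]] e \<alpha> by (auto simp: twisted_basis_def)
      define f where "f \<beta> = (if \<beta> = \<alpha> then z else 0)" for \<beta>
      have "f \<in> tw_hom (CS l r S) \<alpha>"
        using \<alpha> by (simp add: f_def tw_hom_def tw_carrier_def)
      moreover have "basis_combination e f = y"
        using single[OF calculation] z by (simp add: f_def)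
      ultimately show "y \<in> basis_combination e ` tw_hom (CS l r S) \<alpha>"
        by blast
    qed
  qed
qed

lemma ex_graded_iso_twisted_group_algebra:
  "\<exists>\<phi>. bij_betw \<phi> (AS0 l r S) (tw_carrier (CS l r S)) \<and>
     (\<forall>x\<in>AS0 l r S. \<forall>y\<in>AS0 l r S. \<phi> (x + y) = (\<lambda>\<alpha>. \<phi> x \<alpha> + \<phi> y \<alpha>)) \<and>
     (\<forall>c. \<forall>x\<in>AS0 l r S. \<phi> (smul c x) = (\<lambda>\<alpha>. c * \<phi> x \<alpha>)) \<and>
     (\<forall>x\<in>AS0 l r S. \<forall>y\<in>AS0 l r S. \<phi> (mul x y) = tw_mult (CS l r S) eps (\<phi> x) (\<phi> y)) \<and>
     (\<forall>\<alpha>\<in>CS l r S. \<phi> ` S (deg0 \<alpha>) = tw_hom (CS l r S) \<alpha>)"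
proof -
  define \<phi> where "\<phi> = inv_into (tw_carrier (CS l r S)) (basis_combination e)"
  have bij: "bij_betw (basis_combination e) (tw_carrier (CS l r S)) (AS0 l r S)"
    using inj_on_basis_combination basis_combination_image by (simp add: bij_betw_def)
  have \<phi>_eqI: "\<phi> x = f" if "f \<in> tw_carrier (CS l r S)" "basis_combination e f = x" for x f
    unfolding \<phi>_def using inj_on_basis_combination that by (simp add: inv_into_f_eq)
  have \<phi>_in: "\<phi> x \<in> tw_carrier (CS l r S)" and combination_\<phi>: "basis_combination e (\<phi> x) = x"
    if "x \<in> AS0 l r S" for x
    using that basis_combination_image by (auto simp: \<phi>_def inv_into_into f_inv_into_f)
  have "bij_betw \<phi> (AS0 l r S) (tw_carrier (CS l r S))"
    unfolding \<phi>_def using bij by (rule bij_betw_inv_into)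
  moreover have "\<phi> (x + y) = (\<lambda>\<alpha>. \<phi> x \<alpha> + \<phi> y \<alpha>)" if "x \<in> AS0 l r S" "y \<in> AS0 l r S" for x y
    using \<phi>_in combination_\<phi> that by (intro \<phi>_eqI) (simp_all add: tw_carrier_def basis_combination_add)
  moreover have "\<phi> (smul c x) = (\<lambda>\<alpha>. c * \<phi> x \<alpha>)" if "x \<in> AS0 l r S" for c x
    using \<phi>_in combination_\<phi> that by (intro \<phi>_eqI) (simp_all add: tw_carrier_def basis_combination_scale)
  moreover have "\<phi> (mul x y) = tw_mult (CS l r S) eps (\<phi> x) (\<phi> y)"
    if "x \<in> AS0 l r S" "y \<in> AS0 l r S" for x y
    using combination_\<phi> that
    by (intro \<phi>_eqI tw_mult_in_tw_carrier cadd_in_CS) (simp_all add: basis_combination_tw_mult)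
  moreover have "\<phi> ` S (deg0 \<alpha>) = tw_hom (CS l r S) \<alpha>" if "\<alpha> \<in> CS l r S" for \<alpha>
  proof -
    have "tw_hom (CS l r S) \<alpha> \<subseteq> tw_carrier (CS l r S)"
      by (auto simp: tw_hom_def)
    then show ?thesis
      unfolding \<phi>_def basis_combination_tw_hom[OF that, symmetric]
      using inj_on_basis_combination by (rule inv_into_image_cancel[rotated])
  qed
  ultimately show ?thesis
    by (intro exI[of _ \<phi>] conjI ballI allI) simp_all
qed

end

end

theorem mainTheorem8:
  fixes l r :: nat
    and smul :: "complex \<Rightarrow> 'v::ab_group_add \<Rightarrow> 'v"
    and mul :: "'v \<Rightarrow> 'v \<Rightarrow> 'v"
    and one :: 'v
    and S :: "lam \<Rightarrow> 'v set"
    and eps :: "nat set \<Rightarrow> nat set \<Rightarrow> complex"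
  assumes simple: "simple_framed_algebra l r smul mul one S"
    and eps_pm: "\<forall>\<alpha>\<in>CS l r S. \<forall>\<beta>\<in>CS l r S. eps \<alpha> \<beta> \<in> {1, -1}"
    and eps_bimult1: "\<forall>\<alpha>\<in>CS l r S. \<forall>\<beta>\<in>CS l r S. \<forall>\<gamma>\<in>CS l r S.
                        eps (cadd \<alpha> \<beta>) \<gamma> = eps \<alpha> \<gamma> * eps \<beta> \<gamma>"
    and eps_bimult2: "\<forall>\<alpha>\<in>CS l r S. \<forall>\<beta>\<in>CS l r S. \<forall>\<gamma>\<in>CS l r S.
                        eps \<alpha> (cadd \<beta> \<gamma>) = eps \<alpha> \<beta> * eps \<alpha> \<gamma>"
    and eps_diag: "\<forall>\<alpha>\<in>CS l r S. eps \<alpha> \<alpha> = (-1) powi (cwt l r \<alpha> div 2)"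
    and eps_comm: "\<forall>\<alpha>\<in>CS l r S. \<forall>\<beta>\<in>CS l r S.
                     eps \<alpha> \<beta> * eps \<beta> \<alpha> = (-1) powi (cwt l r (cmul \<alpha> \<beta>))"
  shows "\<exists>\<phi> :: 'v \<Rightarrow> (nat set \<Rightarrow> complex).
           bij_betw \<phi> (AS0 l r S) (tw_carrier (CS l r S)) \<and>
           (\<forall>x\<in>AS0 l r S. \<forall>y\<in>AS0 l r S. \<phi> (x + y) = (\<lambda>\<alpha>. \<phi> x \<alpha> + \<phi> y \<alpha>)) \<and>
           (\<forall>c. \<forall>x\<in>AS0 l r S. \<phi> (smul c x) = (\<lambda>\<alpha>. c * \<phi> x \<alpha>)) \<and>
           (\<forall>x\<in>AS0 l r S. \<forall>y\<in>AS0 l r S. \<phi> (mul x y) = tw_mult (CS l r S) eps (\<phi> x) (\<phi> y)) \<and>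
           (\<forall>\<alpha>\<in>CS l r S. \<phi> ` S (deg0 \<alpha>) = tw_hom (CS l r S) \<alpha>)"
proof -
  interpret twisted_framed_alg l r smul mul one S eps
    by unfold_locales
      (use simple eps_pm eps_bimult1 eps_bimult2 eps_comm in \<open>simp_all add: simple_framed_algebra_def\<close>)
  obtain e where "twisted_basis (CS l r S) e"
    using ex_twisted_basis by blast
  then show ?thesis
    by (rule ex_graded_iso_twisted_group_algebra)
qed

end
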